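(* Let $\alpha\in\mathbb{C}\setminus\{0\}$, let $\pi$ be an $O(m+n+1,m+n)$-projection onto $V\subset\mathbb{C}^N$, and let $f(\lambda)$ be a meromorphic map into $SL(N,\mathbb{C})$ satisfying $\sigma(f(-\lambda))=f(\lambda)$ which is holomorphic (with holomorphic inverse) at $\lambda=\alpha$ and $\lambda=-\alpha$. Assume the bilinear form restricted to $\tilde V:=f(\alpha)^{-1}(V)$ is nondegenerate and let $\tilde\pi$ be the $O(m+n+1,m+n)$-projection onto $\tilde V$. Then $\tilde f(\lambda)=k_{\alpha,\pi}(\lambda)f(\lambda)k_{\alpha,\tilde\pi}(\lambda)^{-1}$ is holomorphic at $\lambda=\alpha$ and at $\lambda=-\alpha$.
   Context: $N=2m+2n+1$; $C_{m,n}=\mathrm{diag}(\sum_{i=1}^{2m}e_{i,2m+1-i},\sum_{i=1}^{2n+1}(-1)^{n+i-1}e_{i,2n+2-i})$ (symmetric, $C_{m,n}^2=I$); $\sigma(Y)=(C_{m,n}Y^tC_{m,n}^{-1})^{-1}$. $\mathbb{C}^{N}$ carries the symmetric bilinear form $\langle X,Y\rangle=X^tC_{m,n}Y$; $A^\sharp$ is the adjoint of $A$ for this form. For a subspace $V$ on which the form is nondegenerate, the $O(m+n+1,m+n)$-projection onto $V$ is the linear map $\pi$ with $\pi^2=\pi=\pi^\sharp$ and image $V$ (kernel $V^\perp$); $\pi^\perp:=I-\pi$. For $\alpha\ne0$, $k_{\alpha,\pi}(\lambda)=I+\frac{2\alpha}{\lambda-\alpha}\pi^\perp$; one has $k_{\alpha,\pi}^{-1}=k_{-\alpha,\pi}$.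 *)

theory Defs
  imports "HOL-Complex_Analysis.Complex_Analysis" "Jordan_Normal_Form.Determinant"
begin

definition Nd :: "nat \<Rightarrow> nat \<Rightarrow> nat" where
  "Nd m n = 2*m + 2*n + 1"

definition mat_inv :: "complex mat \<Rightarrow> complex mat" where
  "mat_inv A = (SOME B. B \<in> carrier_mat (dim_row A) (dim_row A) \<and>
                        A * B = 1\<^sub>m (dim_row A) \<and> B * A = 1\<^sub>m (dim_row A))"

text \<open>The matrix C_{m,n}, 0-based indices. First block: entries (i, 2m-1-i) equal 1.
  Second block (1-based i',j' in 1..2n+1): entry (i', 2n+2-i') equals (-1)^(n+i'-1).\<close>
definition Cmat :: "nat \<Rightarrow> nat \<Rightarrow> complex mat" where
  "Cmat m n = mat (Nd m n) (Nd m n) (\<lambda>(i,j).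
     if i < 2*m \<and> j < 2*m then (if i + j = 2*m - 1 then 1 else 0)
     else if 2*m \<le> i \<and> 2*m \<le> j then
       (if (i - 2*m + 1) + (j - 2*m + 1) = 2*n + 2 then (-1) ^ (n + (i - 2*m + 1) - 1) else 0)
     else 0)"

text \<open>sigma(Y) = (C Y^t C^{-1})^{-1}\<close>
definition sigma_inv :: "nat \<Rightarrow> nat \<Rightarrow> complex mat \<Rightarrow> complex mat" where
  "sigma_inv m n Y = mat_inv (Cmat m n * transpose_mat Y * mat_inv (Cmat m n))"

definition bilin :: "nat \<Rightarrow> nat \<Rightarrow> complex vec \<Rightarrow> complex vec \<Rightarrow> complex" where
  "bilin m n X Y = X \<bullet> (Cmat m n *\<^sub>v Y)"

text \<open>Adjoint with respect to the form: <A X, Y> = <X, A^sharp Y>, i.e. A^sharp = C^{-1} A^t C.\<close>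
definition sharp :: "nat \<Rightarrow> nat \<Rightarrow> complex mat \<Rightarrow> complex mat" where
  "sharp m n A = mat_inv (Cmat m n) * transpose_mat A * Cmat m n"

definition nondegenerate_on :: "nat \<Rightarrow> nat \<Rightarrow> complex vec set \<Rightarrow> bool" where
  "nondegenerate_on m n W \<longleftrightarrow> (\<forall>x\<in>W. (\<forall>y\<in>W. bilin m n x y = 0) \<longrightarrow> x = 0\<^sub>v (Nd m n))"

definition O_proj :: "nat \<Rightarrow> nat \<Rightarrow> complex mat \<Rightarrow> complex vec set \<Rightarrow> bool" where
  "O_proj m n P V \<longleftrightarrow> P \<in> carrier_mat (Nd m n) (Nd m n) \<and> P * P = P \<and> sharp m n P = P \<and>
      (\<lambda>x. P *\<^sub>v x) ` carrier_vec (Nd m n) = V"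

definition kmat :: "nat \<Rightarrow> nat \<Rightarrow> complex \<Rightarrow> complex mat \<Rightarrow> complex \<Rightarrow> complex mat" where
  "kmat m n a P z = 1\<^sub>m (Nd m n) + (2 * a / (z - a)) \<cdot>\<^sub>m (1\<^sub>m (Nd m n) - P)"

definition holo_at :: "nat \<Rightarrow> (complex \<Rightarrow> complex mat) \<Rightarrow> complex \<Rightarrow> bool" where
  "holo_at N F z0 \<longleftrightarrow> (\<forall>i<N. \<forall>j<N. \<exists>g. g analytic_on {z0} \<and>
       (\<forall>\<^sub>F w in at z0. F w $$ (i,j) = g w))"

end

theory Submission
  imports Defs
begin

(* Since k_{alpha,pi}^{-1} = k_{-alpha,pi}, the only possible singularities of
   f~ = k_{alpha,pi} f k_{-alpha,pi~} are simple poles at alpha and -alpha.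
   At alpha, k_{-alpha,pi~}(alpha) = pi~, so the residue is a multiple of
   pi^perp f(alpha) pi~; it vanishes because f(alpha) maps the image V~ of pi~ into
   V = ker pi^perp.  At -alpha, k_{alpha,pi}(-alpha) = pi, so the residue is a multiple
   of pi f(-alpha) pi~^perp.  Evaluating the symmetry sigma(f(-lambda)) = f(lambda)
   at alpha by continuity gives f(-alpha) = (f(alpha)^{-1})^sharp; as pi and pi~ are
   self-adjoint, this residue is the adjoint of pi~^perp f(alpha)^{-1} pi, which
   vanishes because f(alpha)^{-1} maps V onto V~ = ker pi~^perp. *)

section \<open>Matrix algebra\<close>

lemma mat_inv_eqI:
  assumes A: "A \<in> carrier_mat k k" and B: "B \<in> carrier_mat k k" and AB: "A * B = 1\<^sub>m k"
  shows "mat_inv A = B"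
proof -
  have BA: "B * A = 1\<^sub>m k" by (rule mat_mult_left_right_inverse[OF A B AB])
  let ?inv = "\<lambda>B. B \<in> carrier_mat k k \<and> A * B = 1\<^sub>m k \<and> B * A = 1\<^sub>m k"
  have "?inv (mat_inv A)"
    unfolding mat_inv_def carrier_matD(1)[OF A] by (rule someI[of ?inv B]) (use B AB BA in auto)
  then have inv: "mat_inv A \<in> carrier_mat k k" "mat_inv A * A = 1\<^sub>m k"
    by auto
  have "mat_inv A = mat_inv A * (A * B)"
    using inv(1) AB by simp
  also have "\<dots> = (mat_inv A * A) * B"
    using assoc_mult_mat[OF inv(1) A B] by simp
  also have "\<dots> = B"
    using inv(2) B by simp
  finally show ?thesis .
qed

lemma mat_inv_mult_self:
  fixes A :: "complex mat"
  assumes A: "A \<in> carrier_mat k k" and det: "det A \<noteq> 0"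
  shows "mat_inv A * A = 1\<^sub>m k"
proof -
  define B where "B = inverse (det A) \<cdot>\<^sub>m adj_mat A"
  have B: "B \<in> carrier_mat k k"
    unfolding B_def using adj_mat(1)[OF A] by simp
  have "A * B = inverse (det A) \<cdot>\<^sub>m (det A \<cdot>\<^sub>m 1\<^sub>m k)"
    unfolding B_def mult_smult_distrib[OF A adj_mat(1)[OF A]] adj_mat(2)[OF A] ..
  also have "\<dots> = 1\<^sub>m k"
    using det by (intro eq_matI) auto
  finally show ?thesis
    using mat_inv_eqI[OF A B] mat_mult_left_right_inverse[OF A B] by simp
qed

lemma mat_eq_zero_of_mult_vec_eq_zero:
  fixes A :: "'a :: comm_ring_1 mat"
  assumes A: "A \<in> carrier_mat k k" and zero: "\<And>x. x \<in> carrier_vec k \<Longrightarrow> A *\<^sub>v x = 0\<^sub>v k"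
  shows "A = 0\<^sub>m k k"
proof (rule eq_matI)
  fix i j assume "i < dim_row (0\<^sub>m k k :: 'a mat)" "j < dim_col (0\<^sub>m k k :: 'a mat)"
  then have i: "i < k" and j: "j < k" by auto
  have "A $$ (i,j) = (A *\<^sub>v unit_vec k j) $ i"
    using A i j by (simp add: scalar_prod_right_unit)
  then show "A $$ (i,j) = 0\<^sub>m k k $$ (i,j)"
    using zero[of "unit_vec k j"] i j by simp
qed (use A in auto)

lemma idempotent_compl_mult_self:
  fixes P :: "'a :: comm_ring_1 mat"
  assumes P: "P \<in> carrier_mat k k" "P * P = P"
  shows "(1\<^sub>m k - P) * P = 0\<^sub>m k k"
proof -
  have "(1\<^sub>m k - P) * P = 1\<^sub>m k * P - P * P"
    using P by (intro minus_mult_distrib_mat) auto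
  then show ?thesis
    using P by (intro eq_matI) auto
qed

lemma idempotent_compl:
  fixes P :: "'a :: comm_ring_1 mat"
  assumes P: "P \<in> carrier_mat k k" "P * P = P"
  shows "(1\<^sub>m k - P) * (1\<^sub>m k - P) = 1\<^sub>m k - P"
proof -
  have "(1\<^sub>m k - P) * (1\<^sub>m k - P) = (1\<^sub>m k - P) * 1\<^sub>m k - (1\<^sub>m k - P) * P"
    using P by (intro mult_minus_distrib_mat) (auto simp: minus_carrier_mat)
  also have "\<dots> = 1\<^sub>m k - P"
    using P by (intro eq_matI) (auto simp: idempotent_compl_mult_self minus_carrier_mat)
  finally show ?thesis .
qed

lemma idempotent_compl_mult_eq_0:
  fixes P M :: "'a :: comm_ring_1 mat"
  assumes P: "P \<in> carrier_mat k k" "P * P = P" and M: "M \<in> carrier_mat k k"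
    and range: "(\<lambda>x. M *\<^sub>v x) ` carrier_vec k \<subseteq> (\<lambda>x. P *\<^sub>v x) ` carrier_vec k"
  shows "(1\<^sub>m k - P) * M = 0\<^sub>m k k"
proof (rule mat_eq_zero_of_mult_vec_eq_zero)
  show "(1\<^sub>m k - P) * M \<in> carrier_mat k k"
    using P M by (intro mult_carrier_mat minus_carrier_mat)
  fix x :: "'a vec" assume x: "x \<in> carrier_vec k"
  then obtain y where y: "y \<in> carrier_vec k" and Mx: "M *\<^sub>v x = P *\<^sub>v y"
    using range by blast
  have compl: "1\<^sub>m k - P \<in> carrier_mat k k"
    using P by (simp add: minus_carrier_mat)
  have "(1\<^sub>m k - P) * M *\<^sub>v x = (1\<^sub>m k - P) *\<^sub>v (P *\<^sub>v y)"
    using assoc_mult_mat_vec[OF compl M x] Mx by simp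
  also have "\<dots> = ((1\<^sub>m k - P) * P) *\<^sub>v y"
    using assoc_mult_mat_vec[OF compl P(1) y] by simp
  finally show "(1\<^sub>m k - P) * M *\<^sub>v x = 0\<^sub>v k"
    using P y by (auto simp: idempotent_compl_mult_self intro!: eq_vecI)
qed

lemma one_plus_smult_idempotent_inverse:
  fixes Q :: "'a :: comm_ring_1 mat"
  assumes Q: "Q \<in> carrier_mat k k" "Q * Q = Q" and ab: "a + b + a * b = 0"
  shows "(1\<^sub>m k + a \<cdot>\<^sub>m Q) * (1\<^sub>m k + b \<cdot>\<^sub>m Q) = 1\<^sub>m k"
proof -
  have aQ: "a \<cdot>\<^sub>m Q \<in> carrier_mat k k" and bQ: "b \<cdot>\<^sub>m Q \<in> carrier_mat k k"
    using Q by auto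
  have "(1\<^sub>m k + a \<cdot>\<^sub>m Q) * (1\<^sub>m k + b \<cdot>\<^sub>m Q)
      = 1\<^sub>m k * (1\<^sub>m k + b \<cdot>\<^sub>m Q) + a \<cdot>\<^sub>m Q * (1\<^sub>m k + b \<cdot>\<^sub>m Q)"
    using aQ bQ by (intro add_mult_distrib_mat[of _ k k _ "1\<^sub>m k + b \<cdot>\<^sub>m Q" k]) auto
  also have "\<dots> = (1\<^sub>m k + b \<cdot>\<^sub>m Q) + (a \<cdot>\<^sub>m Q + a \<cdot>\<^sub>m (b \<cdot>\<^sub>m (Q * Q)))"
    using aQ bQ Q(1)
    by (simp add: mult_add_distrib_mat[OF aQ one_carrier_mat bQ] mult_smult_assoc_mat[OF Q(1) bQ]
        mult_smult_distrib[OF Q(1) Q(1)])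
  also have "\<dots> = 1\<^sub>m k + (a + b + a * b) \<cdot>\<^sub>m Q"
    unfolding Q(2) using Q(1) by (intro eq_matI) (auto simp: algebra_simps)
  also have "\<dots> = 1\<^sub>m k"
    unfolding ab using Q(1) by (intro eq_matI) auto
  finally show ?thesis .
qed

section \<open>Entrywise analytic matrix functions and removable poles\<close>

definition mat_analytic_at :: "nat \<Rightarrow> (complex \<Rightarrow> complex mat) \<Rightarrow> complex \<Rightarrow> bool" where
  "mat_analytic_at k F z \<longleftrightarrow> (\<forall>i<k. \<forall>j<k. (\<lambda>w. F w $$ (i,j)) analytic_on {z})"

lemma mat_analytic_at_const: "mat_analytic_at k (\<lambda>w. A) z"
  unfolding mat_analytic_at_def by simp

lemma mat_analytic_at_add:
  assumes F: "\<And>w. F w \<in> carrier_mat k k" and G: "\<And>w. G w \<in> carrier_mat k k"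
    and "mat_analytic_at k F z" "mat_analytic_at k G z"
  shows "mat_analytic_at k (\<lambda>w. F w + G w) z"
  unfolding mat_analytic_at_def
proof (intro allI impI)
  fix i j assume i: "i < k" and j: "j < k"
  have "(F w + G w) $$ (i,j) = F w $$ (i,j) + G w $$ (i,j)" for w
    using F[of w] G[of w] i j by simp
  then show "(\<lambda>w. (F w + G w) $$ (i,j)) analytic_on {z}"
    using assms(3,4) i j unfolding mat_analytic_at_def by (auto intro!: analytic_on_add)
qed

lemma mat_analytic_at_smult:
  assumes F: "\<And>w. F w \<in> carrier_mat k k" and "c analytic_on {z}" "mat_analytic_at k F z"
  shows "mat_analytic_at k (\<lambda>w. c w \<cdot>\<^sub>m F w) z"
  unfolding mat_analytic_at_def
proof (intro allI impI)
  fix i j assume i: "i < k" and j: "j < k"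
  have "(c w \<cdot>\<^sub>m F w) $$ (i,j) = c w * F w $$ (i,j)" for w
    using F[of w] i j by simp
  then show "(\<lambda>w. (c w \<cdot>\<^sub>m F w) $$ (i,j)) analytic_on {z}"
    using assms(2,3) i j unfolding mat_analytic_at_def by (auto intro!: analytic_on_mult)
qed

lemma mat_analytic_at_mult:
  assumes F: "\<And>w. F w \<in> carrier_mat k k" and G: "\<And>w. G w \<in> carrier_mat k k"
    and "mat_analytic_at k F z" "mat_analytic_at k G z"
  shows "mat_analytic_at k (\<lambda>w. F w * G w) z"
  unfolding mat_analytic_at_def
proof (intro allI impI)
  fix i j assume i: "i < k" and j: "j < k"
  have "(F w * G w) $$ (i,j) = (\<Sum>l<k. F w $$ (i,l) * G w $$ (l,j))" for w
    using F[of w] G[of w] i j by (auto simp: scalar_prod_def lessThan_atLeast0 intro!: sum.cong)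
  moreover have "(\<lambda>w. \<Sum>l<k. F w $$ (i,l) * G w $$ (l,j)) analytic_on {z}"
    using assms(3,4) i j unfolding mat_analytic_at_def by (intro analytic_on_sum analytic_on_mult) auto
  ultimately show "(\<lambda>w. (F w * G w) $$ (i,j)) analytic_on {z}"
    by simp
qed

lemma mat_analytic_at_transpose:
  assumes F: "\<And>w. F w \<in> carrier_mat k k" and "mat_analytic_at k F z"
  shows "mat_analytic_at k (\<lambda>w. transpose_mat (F w)) z"
  unfolding mat_analytic_at_def
proof (intro allI impI)
  fix i j assume i: "i < k" and j: "j < k"
  have "transpose_mat (F w) $$ (i,j) = F w $$ (j,i)" for w
    using F[of w] i j by simp
  then show "(\<lambda>w. transpose_mat (F w) $$ (i,j)) analytic_on {z}"
    using assms(2) i j unfolding mat_analytic_at_def by simp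
qed

lemma mat_analytic_at_compose:
  assumes "mat_analytic_at k F (g z)" and "g analytic_on {z}"
  shows "mat_analytic_at k (\<lambda>w. F (g w)) z"
  using assms analytic_on_compose[of g "{z}"] unfolding mat_analytic_at_def by (auto simp: o_def)

lemma mat_analytic_at_eq_of_eventually_eq:
  assumes F: "\<And>w. F w \<in> carrier_mat k k" and G: "\<And>w. G w \<in> carrier_mat k k"
    and "mat_analytic_at k F z" "mat_analytic_at k G z"
    and eq: "\<forall>\<^sub>F w in at z. F w = G w"
  shows "F z = G z"
proof (rule eq_matI)
  fix i j assume "i < dim_row (G z)" "j < dim_col (G z)"
  then have i: "i < k" and j: "j < k" using G[of z] by auto
  have "isCont (\<lambda>w. F w $$ (i,j)) z"
    using assms(3) i j unfolding mat_analytic_at_def by (simp add: analytic_at_imp_isCont)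
  then have "((\<lambda>w. F w $$ (i,j)) \<longlongrightarrow> F z $$ (i,j)) (at z)"
    by (simp add: isCont_def)
  moreover have "((\<lambda>w. F w $$ (i,j)) \<longlongrightarrow> G z $$ (i,j)) (at z)"
  proof (rule Lim_transform_eventually)
    have "isCont (\<lambda>w. G w $$ (i,j)) z"
      using assms(4) i j unfolding mat_analytic_at_def by (simp add: analytic_at_imp_isCont)
    then show "((\<lambda>w. G w $$ (i,j)) \<longlongrightarrow> G z $$ (i,j)) (at z)"
      by (simp add: isCont_def)
    show "\<forall>\<^sub>F w in at z. G w $$ (i,j) = F w $$ (i,j)"
      using eq by eventually_elim simp
  qed
  ultimately show "F z $$ (i,j) = G z $$ (i,j)"
    by (rule tendsto_unique[OF at_neq_bot])
qed (use F[of z] G[of z] in auto)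

lemma holo_at_cong:
  assumes "holo_at k F z" and "\<forall>\<^sub>F w in at z. F w = G w"
  shows "holo_at k G z"
  unfolding holo_at_def
proof (intro allI impI)
  fix i j assume "i < k" "j < k"
  then obtain g where "g analytic_on {z}" and "\<forall>\<^sub>F w in at z. F w $$ (i,j) = g w"
    using assms(1) unfolding holo_at_def by blast
  moreover from this(2) assms(2) have "\<forall>\<^sub>F w in at z. G w $$ (i,j) = g w"
    by eventually_elim simp
  ultimately show "\<exists>g. g analytic_on {z} \<and> (\<forall>\<^sub>F w in at z. G w $$ (i,j) = g w)"
    by blast
qed

lemma analytic_at_divided_difference:
  assumes "h analytic_on {z0}"
  shows "(\<lambda>z. if z = z0 then deriv h z0 else (h z - h z0) / (z - z0)) analytic_on {z0}"
proof -
  obtain S where "open S" "z0 \<in> S" "h holomorphic_on S"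
    using assms analytic_at by blast
  then show ?thesis
    using pole_lemma_open analytic_at by blast
qed

lemma holo_at_simple_pole:
  assumes H: "\<And>w. H w \<in> carrier_mat k k"
    and "mat_analytic_at k E z0" "mat_analytic_at k H z0" and res: "H z0 = 0\<^sub>m k k"
    and eq: "\<forall>\<^sub>F w in at z0. F w = E w + (c / (w - z0)) \<cdot>\<^sub>m H w"
  shows "holo_at k F z0"
  unfolding holo_at_def
proof (intro allI impI)
  fix i j assume i: "i < k" and j: "j < k"
  define q where "q = (\<lambda>w. if w = z0 then deriv (\<lambda>w. H w $$ (i,j)) z0
                            else (H w $$ (i,j) - H z0 $$ (i,j)) / (w - z0))"
  have "(\<lambda>w. E w $$ (i,j) + c * q w) analytic_on {z0}"
    using assms(2,3) i j unfolding q_def mat_analytic_at_def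
    by (intro analytic_on_add analytic_on_mult analytic_at_divided_difference) auto
  moreover have "\<forall>\<^sub>F w in at z0. F w $$ (i,j) = E w $$ (i,j) + c * q w"
    using eq eventually_neq_at_within[of z0 z0 UNIV]
  proof eventually_elim
    case (elim w)
    then show ?case
      using H[of w] res i j by (simp add: q_def)
  qed
  ultimately show "\<exists>g. g analytic_on {z0} \<and> (\<forall>\<^sub>F w in at z0. F w $$ (i,j) = g w)"
    by blast
qed

lemma holo_at_pole_mult_left:
  assumes Q: "Q \<in> carrier_mat k k" and X: "\<And>w. X w \<in> carrier_mat k k"
    and "mat_analytic_at k X z0" and res: "Q * X z0 = 0\<^sub>m k k"
  shows "holo_at k (\<lambda>w. (1\<^sub>m k + (c / (w - z0)) \<cdot>\<^sub>m Q) * X w) z0"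
proof (rule holo_at_simple_pole[where E = X and H = "\<lambda>w. Q * X w"])
  show "mat_analytic_at k (\<lambda>w. Q * X w) z0"
    using assms by (intro mat_analytic_at_mult mat_analytic_at_const) auto
  have "(1\<^sub>m k + (c / (w - z0)) \<cdot>\<^sub>m Q) * X w = X w + (c / (w - z0)) \<cdot>\<^sub>m (Q * X w)" for w
    using add_mult_distrib_mat[OF one_carrier_mat smult_carrier_mat[OF Q] X[of w]] Q X[of w]
    by (simp add: mult_smult_assoc_mat)
  then show "\<forall>\<^sub>F w in at z0.
      (1\<^sub>m k + (c / (w - z0)) \<cdot>\<^sub>m Q) * X w = X w + (c / (w - z0)) \<cdot>\<^sub>m (Q * X w)"
    by simp
qed (use assms in auto)

lemma holo_at_pole_mult_right:
  assumes Q: "Q \<in> carrier_mat k k" and Y: "\<And>w. Y w \<in> carrier_mat k k"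
    and "mat_analytic_at k Y z0" and res: "Y z0 * Q = 0\<^sub>m k k"
  shows "holo_at k (\<lambda>w. Y w * (1\<^sub>m k + (c / (w - z0)) \<cdot>\<^sub>m Q)) z0"
proof (rule holo_at_simple_pole[where E = Y and H = "\<lambda>w. Y w * Q"])
  show "mat_analytic_at k (\<lambda>w. Y w * Q) z0"
    using assms by (intro mat_analytic_at_mult mat_analytic_at_const) auto
  have "Y w * (1\<^sub>m k + (c / (w - z0)) \<cdot>\<^sub>m Q) = Y w + (c / (w - z0)) \<cdot>\<^sub>m (Y w * Q)" for w
    using mult_add_distrib_mat[OF Y[of w] one_carrier_mat smult_carrier_mat[OF Q]] Q Y[of w]
    by (simp add: mult_smult_distrib)
  then show "\<forall>\<^sub>F w in at z0.
      Y w * (1\<^sub>m k + (c / (w - z0)) \<cdot>\<^sub>m Q) = Y w + (c / (w - z0)) \<cdot>\<^sub>m (Y w * Q)"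
    by simp
qed (use assms in \<open>auto intro: mult_carrier_mat\<close>)

section \<open>The form C, its adjoint and the factors k\<close>

definition Cmat_col :: "nat \<Rightarrow> nat \<Rightarrow> nat \<Rightarrow> nat" where
  "Cmat_col m n i = (if i < 2*m then 2*m - 1 - i else 4*m + 2*n - i)"

definition Cmat_sign :: "nat \<Rightarrow> nat \<Rightarrow> nat \<Rightarrow> complex" where
  "Cmat_sign m n i = (if i < 2*m then 1 else (-1) ^ (n + i - 2*m))"

lemma Cmat_carrier: "Cmat m n \<in> carrier_mat (Nd m n) (Nd m n)"
  unfolding Cmat_def by auto

lemma Cmat_entry:
  assumes "i < Nd m n" "j < Nd m n"
  shows "Cmat m n $$ (i,j) = (if j = Cmat_col m n i then Cmat_sign m n i else 0)"
  using assms unfolding Cmat_def Cmat_col_def Cmat_sign_def Nd_def by (auto simp: algebra_simps)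

lemma Cmat_col_less: "i < Nd m n \<Longrightarrow> Cmat_col m n i < Nd m n"
  unfolding Cmat_col_def Nd_def by auto

lemma Cmat_col_involutive: "i < Nd m n \<Longrightarrow> Cmat_col m n (Cmat_col m n i) = i"
  unfolding Cmat_col_def Nd_def by auto

lemma Cmat_sign_col:
  assumes i: "i < Nd m n"
  shows "Cmat_sign m n (Cmat_col m n i) = Cmat_sign m n i"
proof (cases "i < 2*m")
  case False
  have "(n + (4*m + 2*n - i) - 2*m) + (n + i - 2*m) = 2 * (2*n)"
    using False i unfolding Nd_def by linarith
  then have "even (n + (4*m + 2*n - i) - 2*m) = even (n + i - 2*m)"
    by (metis even_add dvd_triv_left)
  then have "(-1::complex) ^ (n + (4*m + 2*n - i) - 2*m) = (-1) ^ (n + i - 2*m)"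
    by (simp add: minus_one_power_iff)
  then show ?thesis
    using False i unfolding Cmat_col_def Cmat_sign_def Nd_def by auto
qed (simp add: Cmat_col_def Cmat_sign_def)

lemma Cmat_sign_square: "Cmat_sign m n i * Cmat_sign m n i = 1"
  unfolding Cmat_sign_def by (auto simp flip: power_add simp: mult_2[symmetric] power_mult)

lemma Cmat_mult_Cmat: "Cmat m n * Cmat m n = 1\<^sub>m (Nd m n)"
proof (rule eq_matI)
  fix i j assume "i < dim_row (1\<^sub>m (Nd m n))" "j < dim_col (1\<^sub>m (Nd m n) :: complex mat)"
  then have i: "i < Nd m n" and j: "j < Nd m n" by auto
  have "(Cmat m n * Cmat m n) $$ (i,j) = (\<Sum>l<Nd m n. Cmat m n $$ (i,l) * Cmat m n $$ (l,j))"
    using i j Cmat_carrier[of m n] by (auto simp: scalar_prod_def lessThan_atLeast0 intro!: sum.cong)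
  also have "\<dots> = (\<Sum>l<Nd m n. if l = Cmat_col m n i then Cmat_sign m n i * Cmat m n $$ (l,j) else 0)"
    using i by (intro sum.cong) (auto simp: Cmat_entry)
  also have "\<dots> = Cmat_sign m n i * Cmat m n $$ (Cmat_col m n i, j)"
    using Cmat_col_less[OF i] by simp
  also have "\<dots> = 1\<^sub>m (Nd m n) $$ (i,j)"
    using i j Cmat_col_less[OF i] Cmat_col_involutive[OF i] Cmat_sign_col[OF i] Cmat_sign_square
    by (auto simp: Cmat_entry)
  finally show "(Cmat m n * Cmat m n) $$ (i,j) = 1\<^sub>m (Nd m n) $$ (i,j)" .
qed (auto simp: Cmat_def)

lemma transpose_Cmat: "transpose_mat (Cmat m n) = Cmat m n"
proof (rule eq_matI)
  fix i j assume "i < dim_row (Cmat m n)" "j < dim_col (Cmat m n)"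
  then have i: "i < Nd m n" and j: "j < Nd m n" by (auto simp: Cmat_def)
  have "transpose_mat (Cmat m n) $$ (i,j) = Cmat m n $$ (j,i)"
    using i j Cmat_carrier[of m n] by auto
  then show "transpose_mat (Cmat m n) $$ (i,j) = Cmat m n $$ (i,j)"
    using i j Cmat_col_involutive[OF i] Cmat_col_involutive[OF j] Cmat_sign_col[OF i] Cmat_sign_col[OF j]
    by (auto simp: Cmat_entry)
qed (auto simp: Cmat_def)

lemma mat_inv_Cmat: "mat_inv (Cmat m n) = Cmat m n"
  by (rule mat_inv_eqI[OF Cmat_carrier Cmat_carrier Cmat_mult_Cmat])

lemma Cmat_mult_Cmat_mult: "X \<in> carrier_mat (Nd m n) k \<Longrightarrow> Cmat m n * (Cmat m n * X) = X"
  using assoc_mult_mat[OF Cmat_carrier Cmat_carrier, of X] by (simp add: Cmat_mult_Cmat)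

lemma sharp_eq: "sharp m n A = Cmat m n * transpose_mat A * Cmat m n"
  unfolding sharp_def mat_inv_Cmat ..

lemma sigma_inv_eq_mat_inv_sharp: "sigma_inv m n Y = mat_inv (sharp m n Y)"
  unfolding sigma_inv_def sharp_def mat_inv_Cmat ..

context
  fixes m n :: nat
begin

private abbreviation (input) "N \<equiv> Nd m n"
private abbreviation (input) "C \<equiv> Cmat m n"

lemma sharp_carrier: "A \<in> carrier_mat N N \<Longrightarrow> sharp m n A \<in> carrier_mat N N"
  unfolding sharp_eq using Cmat_carrier[of m n] by auto

lemma sharp_mult:
  assumes A: "A \<in> carrier_mat N N" and B: "B \<in> carrier_mat N N"
  shows "sharp m n (A * B) = sharp m n B * sharp m n A"
  using A B Cmat_carrier[of m n]
  by (simp add: sharp_eq transpose_mult[OF A B] assoc_mult_mat[of _ N N _ N _ N]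
      Cmat_mult_Cmat_mult[of _ m n N] Cmat_mult_Cmat)

lemma sharp_sharp:
  assumes A: "A \<in> carrier_mat N N"
  shows "sharp m n (sharp m n A) = A"
  using A Cmat_carrier[of m n]
  by (simp add: sharp_eq transpose_mult[of _ N N _ N] transpose_Cmat assoc_mult_mat[of _ N N _ N _ N]
      Cmat_mult_Cmat_mult[of _ m n N] Cmat_mult_Cmat)

lemma sharp_compl:
  assumes P: "P \<in> carrier_mat N N"
  shows "sharp m n (1\<^sub>m N - P) = 1\<^sub>m N - sharp m n P"
proof -
  have C: "C \<in> carrier_mat N N" by (rule Cmat_carrier)
  have "sharp m n (1\<^sub>m N - P) = (C - C * transpose_mat P) * C"
    unfolding sharp_eq transpose_minus[OF one_carrier_mat P]
    using mult_minus_distrib_mat[OF C one_carrier_mat, of "transpose_mat P"] C P by simp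
  also have "\<dots> = 1\<^sub>m N - sharp m n P"
    unfolding sharp_eq using C P by (simp add: minus_mult_distrib_mat Cmat_mult_Cmat)
  finally show ?thesis .
qed

lemma sharp_zero: "sharp m n (0\<^sub>m N N) = 0\<^sub>m N N"
  unfolding sharp_eq using Cmat_carrier[of m n] by simp

lemma det_sharp:
  assumes A: "A \<in> carrier_mat N N"
  shows "det (sharp m n A) = det A"
proof -
  have C: "C \<in> carrier_mat N N" by (rule Cmat_carrier)
  have "det (sharp m n A) = det A * det (C * C)"
    unfolding sharp_eq using A C by (simp add: det_mult det_transpose)
  then show ?thesis
    by (simp add: Cmat_mult_Cmat)
qed

lemma mat_analytic_at_sharp:
  assumes F: "\<And>w. F w \<in> carrier_mat N N" and "mat_analytic_at N F z"
  shows "mat_analytic_at N (\<lambda>w. sharp m n (F w)) z"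
  unfolding sharp_eq using assms Cmat_carrier[of m n]
  by (intro mat_analytic_at_mult mat_analytic_at_transpose mat_analytic_at_const) auto

lemma kmat_carrier: "P \<in> carrier_mat N N \<Longrightarrow> kmat m n a P z \<in> carrier_mat N N"
  unfolding kmat_def by (simp add: minus_carrier_mat)

lemma kmat_inverse:
  assumes P: "P \<in> carrier_mat N N" "P * P = P" and z: "z \<noteq> a" "z \<noteq> -a"
  shows "mat_inv (kmat m n a P z) = kmat m n (-a) P z"
proof (rule mat_inv_eqI[OF kmat_carrier[OF P(1)] kmat_carrier[OF P(1)]])
  have "z - a \<noteq> 0" "z + a \<noteq> 0"
    using z by (auto simp: add_eq_0_iff)
  then have "2 * a / (z - a) + 2 * - a / (z - - a) + 2 * a / (z - a) * (2 * - a / (z - - a)) = 0"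
    by (simp add: field_simps)
  moreover have "1\<^sub>m N - P \<in> carrier_mat N N"
    using P by (simp add: minus_carrier_mat)
  ultimately show "kmat m n a P z * kmat m n (-a) P z = 1\<^sub>m N"
    unfolding kmat_def using one_plus_smult_idempotent_inverse idempotent_compl[OF P] by blast
qed

lemma kmat_at_neg:
  assumes "a \<noteq> 0" and P: "P \<in> carrier_mat N N"
  shows "kmat m n a P (-a) = P"
proof -
  have "2 * a / (- a - a) = -1"
    using assms(1) by (simp add: field_simps)
  then show ?thesis
    unfolding kmat_def using P by (intro eq_matI) auto
qed

lemma mat_analytic_at_kmat:
  assumes P: "P \<in> carrier_mat N N" and "z \<noteq> a"
  shows "mat_analytic_at N (kmat m n a P) z"
  unfolding kmat_def using assms
  by (intro mat_analytic_at_add mat_analytic_at_smult mat_analytic_at_const)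
    (auto intro!: analytic_intros simp: minus_carrier_mat)

end

section \<open>Vanishing of the residues\<close>

lemma O_proj_compl_mult_image:
  assumes P: "O_proj m n P V" and P': "O_proj m n P' ((\<lambda>x. B *\<^sub>v x) ` V)"
    and A: "A \<in> carrier_mat (Nd m n) (Nd m n)" and B: "B \<in> carrier_mat (Nd m n) (Nd m n)"
    and AB: "A * B = 1\<^sub>m (Nd m n)"
  shows "(1\<^sub>m (Nd m n) - P) * (A * P') = 0\<^sub>m (Nd m n) (Nd m n)"
proof (rule idempotent_compl_mult_eq_0)
  show "P \<in> carrier_mat (Nd m n) (Nd m n)" "P * P = P" "A * P' \<in> carrier_mat (Nd m n) (Nd m n)"
    using P P' A unfolding O_proj_def by auto
  show "(\<lambda>x. (A * P') *\<^sub>v x) ` carrier_vec (Nd m n) \<subseteq> (\<lambda>x. P *\<^sub>v x) ` carrier_vec (Nd m n)"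
  proof clarify
    fix x :: "complex vec" assume x: "x \<in> carrier_vec (Nd m n)"
    have "P' *\<^sub>v x \<in> (\<lambda>x. B *\<^sub>v x) ` V"
      using P' x unfolding O_proj_def by blast
    then obtain v where v: "v \<in> V" and P'x: "P' *\<^sub>v x = B *\<^sub>v v"
      by blast
    have v_carrier: "v \<in> carrier_vec (Nd m n)"
      using P v unfolding O_proj_def by auto
    have P'_carrier: "P' \<in> carrier_mat (Nd m n) (Nd m n)"
      using P' unfolding O_proj_def by auto
    have "(A * P') *\<^sub>v x = A *\<^sub>v (B *\<^sub>v v)"
      using assoc_mult_mat_vec[OF A P'_carrier x] P'x by simp
    also have "\<dots> = (A * B) *\<^sub>v v"
      using assoc_mult_mat_vec[OF A B v_carrier] by simp
    finally show "(A * P') *\<^sub>v x \<in> (\<lambda>x. P *\<^sub>v x) ` carrier_vec (Nd m n)"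
      using P v v_carrier unfolding AB O_proj_def by auto
  qed
qed

lemma O_proj_mult_sharp_compl:
  assumes P: "O_proj m n P V" and P': "O_proj m n P' ((\<lambda>x. B *\<^sub>v x) ` V)"
    and B: "B \<in> carrier_mat (Nd m n) (Nd m n)"
  shows "P * sharp m n B * (1\<^sub>m (Nd m n) - P') = 0\<^sub>m (Nd m n) (Nd m n)"
proof -
  have Pc: "P \<in> carrier_mat (Nd m n) (Nd m n)" "sharp m n P = P"
    and P'c: "P' \<in> carrier_mat (Nd m n) (Nd m n)" "sharp m n P' = P'"
    using P P' unfolding O_proj_def by auto
  have "(1\<^sub>m (Nd m n) - P') * (B * P) = 0\<^sub>m (Nd m n) (Nd m n)"
  proof (rule idempotent_compl_mult_eq_0)
    show "P' \<in> carrier_mat (Nd m n) (Nd m n)" "P' * P' = P'" "B * P \<in> carrier_mat (Nd m n) (Nd m n)"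
      using P' B Pc unfolding O_proj_def by auto
    show "(\<lambda>x. (B * P) *\<^sub>v x) ` carrier_vec (Nd m n) \<subseteq> (\<lambda>x. P' *\<^sub>v x) ` carrier_vec (Nd m n)"
      using P P' B Pc unfolding O_proj_def by (auto simp: assoc_mult_mat_vec)
  qed
  then have "sharp m n ((1\<^sub>m (Nd m n) - P') * (B * P)) = 0\<^sub>m (Nd m n) (Nd m n)"
    by (simp add: sharp_zero)
  then show ?thesis
    using Pc P'c B
    by (simp add: sharp_mult sharp_compl minus_carrier_mat)
qed

lemma mult_sharp_reflection_eq_one:
  assumes F: "\<And>w. F w \<in> carrier_mat (Nd m n) (Nd m n)"
    and an: "mat_analytic_at (Nd m n) F z" "mat_analytic_at (Nd m n) F (-z)"
    and det: "\<forall>\<^sub>F w in at z. det (F (-w)) = 1"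
    and sym: "\<forall>\<^sub>F w in at z. sigma_inv m n (F (-w)) = F w"
  shows "F z * sharp m n (F (-z)) = 1\<^sub>m (Nd m n)"
proof (rule mat_analytic_at_eq_of_eventually_eq[where F = "\<lambda>w. F w * sharp m n (F (-w))"
      and G = "\<lambda>w. 1\<^sub>m (Nd m n)"])
  show "mat_analytic_at (Nd m n) (\<lambda>w. F w * sharp m n (F (-w))) z"
    using F an
    by (intro mat_analytic_at_mult mat_analytic_at_sharp mat_analytic_at_compose[where g = uminus])
      (auto simp: sharp_carrier intro!: analytic_intros)
  show "\<forall>\<^sub>F w in at z. F w * sharp m n (F (-w)) = 1\<^sub>m (Nd m n)"
    using det sym
  proof eventually_elim
    case (elim w)
    have "mat_inv (sharp m n (F (-w))) * sharp m n (F (-w)) = 1\<^sub>m (Nd m n)"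
      using elim(1) by (intro mat_inv_mult_self sharp_carrier F) (simp add: det_sharp[OF F])
    then show ?case
      using elim(2) by (simp add: sigma_inv_eq_mat_inv_sharp)
  qed
qed (use F in \<open>auto intro: mult_carrier_mat sharp_carrier simp: mat_analytic_at_const\<close>)

lemma holo_at_kmat_dressing:
  assumes a: "a \<noteq> 0"
    and P: "P \<in> carrier_mat (Nd m n) (Nd m n)" "P * P = P"
    and P': "P' \<in> carrier_mat (Nd m n) (Nd m n)" "P' * P' = P'"
    and F: "\<And>z. F z \<in> carrier_mat (Nd m n) (Nd m n)"
    and F_an: "mat_analytic_at (Nd m n) F a" "mat_analytic_at (Nd m n) F (-a)"
    and res_pos: "(1\<^sub>m (Nd m n) - P) * (F a * P') = 0\<^sub>m (Nd m n) (Nd m n)"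
    and res_neg: "P * F (-a) * (1\<^sub>m (Nd m n) - P') = 0\<^sub>m (Nd m n) (Nd m n)"
  shows "holo_at (Nd m n) (\<lambda>z. kmat m n a P z * F z * mat_inv (kmat m n a P' z)) a \<and>
         holo_at (Nd m n) (\<lambda>z. kmat m n a P z * F z * mat_inv (kmat m n a P' z)) (-a)"
proof -
  let ?N = "Nd m n"
  have pole_pos: "holo_at ?N (\<lambda>w. kmat m n a P w * (F w * kmat m n (-a) P' w)) a"
    unfolding kmat_def[of m n a P]
  proof (rule holo_at_pole_mult_left)
    show "mat_analytic_at ?N (\<lambda>w. F w * kmat m n (-a) P' w) a"
      using a F_an P' by (intro mat_analytic_at_mult mat_analytic_at_kmat F kmat_carrier) auto
    show "(1\<^sub>m ?N - P) * (F a * kmat m n (-a) P' a) = 0\<^sub>m ?N ?N"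
      using kmat_at_neg[of "-a" P' m n] a P' res_pos by simp
  qed (use P P' F in \<open>auto intro: mult_carrier_mat kmat_carrier simp: minus_carrier_mat\<close>)
  have pole_neg: "holo_at ?N (\<lambda>w. kmat m n a P w * F w * kmat m n (-a) P' w) (-a)"
    unfolding kmat_def[of m n "-a" P']
  proof (rule holo_at_pole_mult_right)
    show "mat_analytic_at ?N (\<lambda>w. kmat m n a P w * F w) (-a)"
      using a F_an P by (intro mat_analytic_at_mult mat_analytic_at_kmat F kmat_carrier) auto
    show "kmat m n a P (-a) * F (-a) * (1\<^sub>m ?N - P') = 0\<^sub>m ?N ?N"
      using kmat_at_neg[OF a P(1)] res_neg by simp
  qed (use P P' F in \<open>auto intro: mult_carrier_mat kmat_carrier simp: minus_carrier_mat\<close>)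
  have assoc: "kmat m n a P w * (F w * kmat m n (-a) P' w)
      = kmat m n a P w * F w * kmat m n (-a) P' w" for w
    using assoc_mult_mat[OF kmat_carrier[OF P(1)] F kmat_carrier[OF P'(1)]] by simp
  have inverse: "\<forall>\<^sub>F w in at z. kmat m n a P w * F w * kmat m n (-a) P' w
      = kmat m n a P w * F w * mat_inv (kmat m n a P' w)" for z
    using eventually_neq_at_within[of a z UNIV] eventually_neq_at_within[of "-a" z UNIV]
    by eventually_elim (simp add: kmat_inverse[OF P'])
  show ?thesis
    using holo_at_cong[OF pole_pos[unfolded assoc] inverse] holo_at_cong[OF pole_neg inverse] by simp
qed

theorem mainTheorem4:
  fixes m n :: nat and \<alpha> :: complex and P :: "complex mat" and V :: "complex vec set"
    and f :: "complex \<Rightarrow> complex mat"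
  assumes alpha: "\<alpha> \<noteq> 0"
    and proj: "O_proj m n P V"
    and fcar: "\<And>z. f z \<in> carrier_mat (Nd m n) (Nd m n)"
    and fmero: "\<And>i j. i < Nd m n \<Longrightarrow> j < Nd m n \<Longrightarrow> (\<lambda>z. f z $$ (i,j)) meromorphic_on UNIV"
    and fSL: "\<forall>\<^sub>\<approx>z\<in>UNIV. det (f z) = 1"
    and fsym: "\<forall>\<^sub>\<approx>z\<in>UNIV. sigma_inv m n (f (- z)) = f z"
    and fhol: "\<And>i j z. i < Nd m n \<Longrightarrow> j < Nd m n \<Longrightarrow> z \<in> {\<alpha>, -\<alpha>} \<Longrightarrow>
                 (\<lambda>w. f w $$ (i,j)) analytic_on {z}"
    and finvhol: "\<And>i j z. i < Nd m n \<Longrightarrow> j < Nd m n \<Longrightarrow> z \<in> {\<alpha>, -\<alpha>} \<Longrightarrow>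
                 (\<lambda>w. mat_inv (f w) $$ (i,j)) analytic_on {z}"
    and nondeg: "nondegenerate_on m n ((\<lambda>x. mat_inv (f \<alpha>) *\<^sub>v x) ` V)"
    and proj': "O_proj m n P' ((\<lambda>x. mat_inv (f \<alpha>) *\<^sub>v x) ` V)"
  shows "holo_at (Nd m n) (\<lambda>z. kmat m n \<alpha> P z * f z * mat_inv (kmat m n \<alpha> P' z)) \<alpha> \<and>
         holo_at (Nd m n) (\<lambda>z. kmat m n \<alpha> P z * f z * mat_inv (kmat m n \<alpha> P' z)) (-\<alpha>)"
proof -
  let ?N = "Nd m n"
  define B where "B = sharp m n (f (-\<alpha>))"
  have B: "B \<in> carrier_mat ?N ?N"
    unfolding B_def by (rule sharp_carrier[OF fcar])
  have f_an: "mat_analytic_at ?N f z" if "z \<in> {\<alpha>, -\<alpha>}" for z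
    using fhol that unfolding mat_analytic_at_def by blast
  have "\<forall>\<^sub>F w in at (-\<alpha>). det (f w) = 1"
    using fSL by (rule eventually_cosparse_imp_eventually_at) simp
  then have det: "\<forall>\<^sub>F w in at \<alpha>. det (f (-w)) = 1"
    unfolding filtermap_at_minus[symmetric] eventually_filtermap .
  have sym: "\<forall>\<^sub>F w in at \<alpha>. sigma_inv m n (f (-w)) = f w"
    using fsym by (rule eventually_cosparse_imp_eventually_at) simp
  have fB: "f \<alpha> * B = 1\<^sub>m ?N"
    unfolding B_def using mult_sharp_reflection_eq_one[OF fcar f_an f_an det sym] by simp
  have proj'_B: "O_proj m n P' ((\<lambda>x. B *\<^sub>v x) ` V)"
    using proj' mat_inv_eqI[OF fcar B fB] by simp
  show ?thesis
  proof (rule holo_at_kmat_dressing[OF alpha _ _ _ _ fcar f_an f_an])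
    show "(1\<^sub>m ?N - P) * (f \<alpha> * P') = 0\<^sub>m ?N ?N"
      by (rule O_proj_compl_mult_image[OF proj proj'_B fcar B fB])
    show "P * f (-\<alpha>) * (1\<^sub>m ?N - P') = 0\<^sub>m ?N ?N"
      using O_proj_mult_sharp_compl[OF proj proj'_B B] sharp_sharp[OF fcar] by (simp add: B_def)
  qed (use proj proj' in \<open>auto simp: O_proj_def\<close>)
qed

end
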